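(* Let $a=(a_{00},a_{01},a_{10},a_{11})$ have strictly positive entries, $a_\triangle=a_{01}+a_{10}$, $a_{++}=a_{00}+a_{01}+a_{10}+a_{11}$, and let $x_{++}\ge0$ be a fixed integer. Consider observed counts $n=(n_{00},n_{01},n_{10},n_{11})$ with known total $n_{++}$, $n_\triangle=n_{01}+n_{10}$, and sampling distribution $$f(n\mid\eta,\theta,\gamma)=\mathrm{Bin}(n_\triangle\mid n_{++},\eta)\,\mathrm{Bin}(n_{01}\mid n_\triangle,\theta)\,\mathrm{Bin}(n_{00}\mid n_{++}-n_\triangle,\gamma).$$ Let $p_H(\eta)=\mathrm{Beta}(\eta\mid a_\triangle,a_{++}-a_\triangle)$, $p_H(\theta)=\mathrm{Beta}(\theta\mid a_{01},a_{10})$, $p_H(\gamma)=\mathrm{Beta}(\gamma\mid a_{00},a_{11})$. Define the intrinsic prior under $H$ as $p^I_H(\eta,\theta,\gamma\mid H_0)=p_H(\gamma)\,p^I_H(\eta,\theta\mid H_0)$, where $$p^I_H(\eta,\theta\mid H_0)=p_H(\eta)p_H(\theta)\,E_{\eta,\theta}\!\left[\frac{B(a_{01},a_{10})}{2^{x_\triangle}B(a_{01}+x_{01},a_{10}+x_{10})}\right],$$ the expectation being over imaginary counts $(x_{01},x_{10},x_{++}-x_\triangle)$, $x_\triangle=x_{01}+x_{10}$, multinomial with $x_{++}$ trials and cell probabilities $(\eta\theta,\eta(1-\theta),1-\eta)$. Let $m^I_H(n)=\iiint f(n\mid\eta,\theta,\gamma)p^I_H(\eta,\theta,\gamma\mid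 H_0)\,d\eta\,d\theta\,d\gamma$, $m_{H_0}(n)=\iint f(n\mid\eta,1/2,\gamma)p_H(\eta)p_H(\gamma)\,d\eta\,d\gamma$ and $BF^I_{H,H_0}(n)=m^I_H(n)/m_{H_0}(n)$. Then $$BF^I_{H,H_0}(n)=\sum_{x_{01}}\sum_{x_{10}}\frac{x_{++}!}{x_{01}!\,x_{10}!\,(x_{++}-x_\triangle)!}\left(\frac14\right)^{x_{01}}\left(\frac14\right)^{x_{10}}\left(\frac12\right)^{x_{++}-x_\triangle}BF^M_{\eta\neq\frac12,\eta=\frac12}(x\mid n)\times BF^{Co}_{H,H_0}(n\mid x),$$ the sum being over integers $x_{01},x_{10}\ge0$ with $x_{01}+x_{10}\le x_{++}$, where $$BF^{Co}_{H,H_0}(n\mid x)=2^{n_\triangle}\frac{B(a_{01}+x_{01}+n_{01},\,a_\triangle-a_{01}+x_\triangle-x_{01}+n_\triangle-n_{01})}{B(a_{01}+x_{01},\,a_\triangle-a_{01}+x_\triangle-x_{01})}$$ and $$BF^M_{\eta\neq\frac12,\eta=\frac12}(x\mid n)=2^{x_{++}}\frac{B(a_\triangle+x_\triangle+n_\triangle,\,a_{++}-a_\triangle+x_{++}-x_\triangle+n_{++}-n_\triangle)}{B(a_\triangle+n_\triangle,\,a_{++}-a_\triangle+n_{++}-n_\triangle)}.$$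
   Context: $\mathrm{Bin}(y\mid m,\psi)=\binom{m}{y}\psi^y(1-\psi)^{m-y}$; $B(A,B)=\int_0^1t^{A-1}(1-t)^{B-1}dt$ is the Beta function and $\mathrm{Beta}(u\mid A,B)=u^{A-1}(1-u)^{B-1}/B(A,B)$ the Beta density. Setting: a $2\times2$ matched-pair table with cell probabilities $\pi\sim\mathrm{Dir}(a)$ under $H$, parametrized by $\eta=\pi_{01}+\pi_{10}$, $\theta=\pi_{01}/(\pi_{01}+\pi_{10})$, $\gamma=\pi_{00}/(\pi_{00}+\pi_{11})$; the hypotheses are $H:\theta\neq1/2$ and $H_0:\theta=1/2$, with the prior on $(\eta,\gamma)$ under $H_0$ equal to its $H$-marginal. *)

theory Defs
  imports "HOL-Analysis.Analysis"
begin

definition Bin :: "nat \<Rightarrow> nat \<Rightarrow> real \<Rightarrow> real" where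
  "Bin y m \<psi> = real (m choose y) * \<psi> ^ y * (1 - \<psi>) ^ (m - y)"

text \<open>Beta density Beta(u | A, B), using the library Beta function
  (equal to the Euler integral for positive arguments).\<close>
definition beta_dens :: "real \<Rightarrow> real \<Rightarrow> real \<Rightarrow> real" where
  "beta_dens A B u = u powr (A - 1) * (1 - u) powr (B - 1) / Beta A B"

definition multi3 :: "nat \<Rightarrow> nat \<Rightarrow> nat \<Rightarrow> real" where
  "multi3 N i j = fact N / (fact i * fact j * fact (N - i - j))"

definition xset :: "nat \<Rightarrow> (nat \<times> nat) set" where
  "xset xpp = {(i, j). i + j \<le> xpp}"

definition samp :: "nat \<Rightarrow> nat \<Rightarrow> nat \<Rightarrow> nat \<Rightarrow> real \<Rightarrow> real \<Rightarrow> real \<Rightarrow> real" where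
  "samp n00 n01 n10 n11 \<eta> \<theta> \<gamma> =
     (let npp = n00 + n01 + n10 + n11; nd = n01 + n10 in
      Bin nd npp \<eta> * Bin n01 nd \<theta> * Bin n00 (npp - nd) \<gamma>)"

definition pI_eta_theta :: "real \<Rightarrow> real \<Rightarrow> real \<Rightarrow> real \<Rightarrow> nat \<Rightarrow> real \<Rightarrow> real \<Rightarrow> real" where
  "pI_eta_theta a00 a01 a10 a11 xpp \<eta> \<theta> =
     (let ad = a01 + a10; app = a00 + a01 + a10 + a11 in
      beta_dens ad (app - ad) \<eta> * beta_dens a01 a10 \<theta> *
      (\<Sum>(x01, x10)\<in>xset xpp.
          multi3 xpp x01 x10 * (\<eta> * \<theta>) ^ x01 * (\<eta> * (1 - \<theta>)) ^ x10
            * (1 - \<eta>) ^ (xpp - (x01 + x10))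
          * (Beta a01 a10 / (2 ^ (x01 + x10) * Beta (a01 + real x01) (a10 + real x10)))))"

definition pI :: "real \<Rightarrow> real \<Rightarrow> real \<Rightarrow> real \<Rightarrow> nat \<Rightarrow> real \<Rightarrow> real \<Rightarrow> real \<Rightarrow> real" where
  "pI a00 a01 a10 a11 xpp \<eta> \<theta> \<gamma> =
     beta_dens a00 a11 \<gamma> * pI_eta_theta a00 a01 a10 a11 xpp \<eta> \<theta>"

definition mI :: "real \<Rightarrow> real \<Rightarrow> real \<Rightarrow> real \<Rightarrow> nat \<Rightarrow> nat \<Rightarrow> nat \<Rightarrow> nat \<Rightarrow> nat \<Rightarrow> real" where
  "mI a00 a01 a10 a11 xpp n00 n01 n10 n11 =
     (LBINT \<eta>:{0..1}. LBINT \<theta>:{0..1}. LBINT \<gamma>:{0..1}.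
        samp n00 n01 n10 n11 \<eta> \<theta> \<gamma> * pI a00 a01 a10 a11 xpp \<eta> \<theta> \<gamma>)"

definition m0 :: "real \<Rightarrow> real \<Rightarrow> real \<Rightarrow> real \<Rightarrow> nat \<Rightarrow> nat \<Rightarrow> nat \<Rightarrow> nat \<Rightarrow> real" where
  "m0 a00 a01 a10 a11 n00 n01 n10 n11 =
     (let ad = a01 + a10; app = a00 + a01 + a10 + a11 in
      (LBINT \<eta>:{0..1}. LBINT \<gamma>:{0..1}.
        samp n00 n01 n10 n11 \<eta> (1/2) \<gamma> * beta_dens ad (app - ad) \<eta> * beta_dens a00 a11 \<gamma>))"

definition BF_I :: "real \<Rightarrow> real \<Rightarrow> real \<Rightarrow> real \<Rightarrow> nat \<Rightarrow> nat \<Rightarrow> nat \<Rightarrow> nat \<Rightarrow> nat \<Rightarrow> real" where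
  "BF_I a00 a01 a10 a11 xpp n00 n01 n10 n11 =
     mI a00 a01 a10 a11 xpp n00 n01 n10 n11 / m0 a00 a01 a10 a11 n00 n01 n10 n11"

definition BF_Co :: "real \<Rightarrow> real \<Rightarrow> real \<Rightarrow> real \<Rightarrow> nat \<Rightarrow> nat \<Rightarrow> nat \<Rightarrow> nat \<Rightarrow> nat \<Rightarrow> nat \<Rightarrow> real" where
  "BF_Co a00 a01 a10 a11 x01 x10 n00 n01 n10 n11 =
     (let ad = a01 + a10; xd = x01 + x10; nd = n01 + n10 in
      2 ^ nd * Beta (a01 + real x01 + real n01) (ad - a01 + real xd - real x01 + real nd - real n01)
             / Beta (a01 + real x01) (ad - a01 + real xd - real x01))"

definition BF_M :: "real \<Rightarrow> real \<Rightarrow> real \<Rightarrow> real \<Rightarrow> nat \<Rightarrow> nat \<Rightarrow> nat \<Rightarrow> nat \<Rightarrow> nat \<Rightarrow> nat \<Rightarrow> nat \<Rightarrow> real" where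
  "BF_M a00 a01 a10 a11 xpp x01 x10 n00 n01 n10 n11 =
     (let ad = a01 + a10; app = a00 + a01 + a10 + a11; xd = x01 + x10;
          nd = n01 + n10; npp = n00 + n01 + n10 + n11 in
      2 ^ xpp * Beta (ad + real xd + real nd) (app - ad + real xpp - real xd + real npp - real nd)
              / Beta (ad + real nd) (app - ad + real npp - real nd))"

end

theory Submission
  imports Defs
begin

text \<open>Beta priors are conjugate to binomial likelihoods: \<open>Bin(y | m, t) Beta(t | A, B)\<close> is the
  beta-binomial probability of \<open>y\<close> times the Beta density \<open>Beta(t | A + y, B + m - y)\<close>.
  Given the imaginary counts \<open>x\<close>, the intrinsic prior of \<open>(\<eta>, \<theta>)\<close> is the product of the
  posterior Beta densities of \<open>\<eta>\<close> and \<open>\<theta>\<close>, so it is a finite mixture of products of Beta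
  densities. Hence every integral in \<open>m^I_H\<close> and \<open>m_{H_0}\<close> is a beta-binomial probability, the
  factor coming from \<open>\<gamma>\<close> cancels, and the remaining ratios regroup into \<open>BF^M\<close> and \<open>BF^Co\<close>.\<close>

definition beta_binomial :: "nat \<Rightarrow> nat \<Rightarrow> real \<Rightarrow> real \<Rightarrow> real" where
  "beta_binomial y m A B = real (m choose y) * Beta (A + real y) (B + real (m - y)) / Beta A B"

lemma Beta_real_pos: "0 < a \<Longrightarrow> 0 < b \<Longrightarrow> 0 < Beta a (b::real)"
  by (simp add: Beta_def)

lemma power_mult_powr: "0 \<le> (t::real) \<Longrightarrow> t ^ k * t powr c = t powr (c + real k)"
  by (cases "t = 0") (auto simp: powr_add powr_realpow)

lemma beta_dens_tilt:
  fixes A B t :: real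
  assumes "A > 0" "B > 0" "t \<in> {0..1}"
  shows "t ^ k * (1 - t) ^ l * beta_dens A B t
    = Beta (A + real k) (B + real l) / Beta A B * beta_dens (A + real k) (B + real l) t"
proof -
  have "t ^ k * (1 - t) ^ l * (t powr (A - 1) * (1 - t) powr (B - 1))
      = t powr (A + real k - 1) * (1 - t) powr (B + real l - 1)"
    using assms(3) power_mult_powr[of t k "A - 1"] power_mult_powr[of "1 - t" l "B - 1"]
    by (simp add: algebra_simps)
  then show ?thesis
    using Beta_real_pos[of "A + real k" "B + real l"] assms(1,2)
    by (simp add: beta_dens_def)
qed

lemma beta_dens_normalized:
  fixes A B :: real
  assumes "A > 0" "B > 0"
  shows set_integrable_beta_dens: "set_integrable lborel {0..1} (beta_dens A B)"
    and integral_beta_dens: "(LBINT t:{0..1}. beta_dens A B t) = 1"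
proof -
  have kernel: "set_integrable lborel {0..1} (\<lambda>t. t powr (A - 1) * (1 - t) powr (B - 1))"
    using integrable_Beta[OF assms] .
  then show "set_integrable lborel {0..1} (beta_dens A B)"
    unfolding beta_dens_def by (rule set_integrable_divide)
  have "(LBINT t:{0..1}. t powr (A - 1) * (1 - t) powr (B - 1)) = Beta A B"
    using set_borel_integral_eq_integral(2)[OF kernel] has_integral_Beta_real[OF assms]
    by (simp add: integral_unique)
  then show "(LBINT t:{0..1}. beta_dens A B t) = 1"
    using Beta_real_pos[OF assms] by (simp add: beta_dens_def)
qed

lemma Bin_mult_beta_dens:
  fixes A B t :: real
  assumes "A > 0" "B > 0" "t \<in> {0..1}"
  shows "Bin y m t * beta_dens A B t
    = beta_binomial y m A B * beta_dens (A + real y) (B + real (m - y)) t"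
proof -
  have "Bin y m t * beta_dens A B t
      = real (m choose y) * (t ^ y * (1 - t) ^ (m - y) * beta_dens A B t)"
    by (simp add: Bin_def mult_ac)
  then show ?thesis
    using beta_dens_tilt[OF assms, of y "m - y"] by (simp add: beta_binomial_def)
qed

lemma beta_binomial_marginal:
  fixes A B :: real
  assumes "A > 0" "B > 0"
  shows set_integrable_Bin_beta_dens: "set_integrable lborel {0..1} (\<lambda>t. Bin y m t * beta_dens A B t)"
    and integral_Bin_beta_dens: "(LBINT t:{0..1}. Bin y m t * beta_dens A B t) = beta_binomial y m A B"
proof -
  have pos: "A + real y > 0" "B + real (m - y) > 0" using assms by auto
  have eq: "\<And>t. t \<in> {0..1} \<Longrightarrow> Bin y m t * beta_dens A B t
      = beta_binomial y m A B * beta_dens (A + real y) (B + real (m - y)) t"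
    using Bin_mult_beta_dens[OF assms] by blast
  show "set_integrable lborel {0..1} (\<lambda>t. Bin y m t * beta_dens A B t)"
    using set_integrable_beta_dens[OF pos]
    by (subst set_integrable_cong[OF refl refl eq]) auto
  have "(LBINT t:{0..1}. Bin y m t * beta_dens A B t)
      = (LBINT t:{0..1}. beta_binomial y m A B * beta_dens (A + real y) (B + real (m - y)) t)"
    using eq by (intro set_lebesgue_integral_cong) auto
  then show "(LBINT t:{0..1}. Bin y m t * beta_dens A B t) = beta_binomial y m A B"
    using integral_beta_dens[OF pos] by simp
qed

lemma set_integral_sum:
  fixes f :: "'i \<Rightarrow> 'a \<Rightarrow> real"
  assumes "\<And>i. i \<in> I \<Longrightarrow> set_integrable M A (f i)"
  shows "(LINT x:A|M. (\<Sum>i\<in>I. f i x)) = (\<Sum>i\<in>I. LINT x:A|M. f i x)"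
  using assms unfolding set_lebesgue_integral_def set_integrable_def
  by (simp add: sum_distrib_left integral_sum)

lemma integral_Bin_beta_mixture:
  fixes A B c :: "'i \<Rightarrow> real"
  assumes "\<And>p. p \<in> P \<Longrightarrow> A p > 0 \<and> B p > 0"
  shows "(LBINT t:{0..1}. Bin y m t * (\<Sum>p\<in>P. c p * beta_dens (A p) (B p) t))
       = (\<Sum>p\<in>P. c p * beta_binomial y m (A p) (B p))"
proof -
  have "(LBINT t:{0..1}. Bin y m t * (\<Sum>p\<in>P. c p * beta_dens (A p) (B p) t))
      = (LBINT t:{0..1}. (\<Sum>p\<in>P. c p * (Bin y m t * beta_dens (A p) (B p) t)))"
    by (simp add: sum_distrib_left mult_ac)
  also have "\<dots> = (\<Sum>p\<in>P. c p * (LBINT t:{0..1}. Bin y m t * beta_dens (A p) (B p) t))"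
    using assms by (simp add: set_integral_sum set_integrable_Bin_beta_dens)
  also have "\<dots> = (\<Sum>p\<in>P. c p * beta_binomial y m (A p) (B p))"
    using assms by (simp add: integral_Bin_beta_dens)
  finally show ?thesis .
qed

lemma samp_factor:
  "samp n00 n01 n10 n11 \<eta> \<theta> \<gamma> =
     Bin (n01 + n10) (n00 + n01 + n10 + n11) \<eta> * Bin n01 (n01 + n10) \<theta> * Bin n00 (n00 + n11) \<gamma>"
  by (simp add: samp_def Let_def)

text \<open>The weights are the prior predictive probabilities of the imaginary counts
  \<open>(i, j)\<close> under \<open>H\<^sub>0\<close>.\<close>
lemma pI_eta_theta_mixture:
  fixes a00 a01 a10 a11 :: real
  assumes "a00 > 0" "a01 > 0" "a10 > 0" "a11 > 0" "\<eta> \<in> {0..1}" "\<theta> \<in> {0..1}"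
  shows "pI_eta_theta a00 a01 a10 a11 xpp \<eta> \<theta> =
    (\<Sum>(i, j)\<in>xset xpp.
       multi3 xpp i j / 2 ^ (i + j)
       * (Beta (a01 + a10 + real (i + j)) (a00 + a11 + real (xpp - (i + j))) / Beta (a01 + a10) (a00 + a11))
       * beta_dens (a01 + a10 + real (i + j)) (a00 + a11 + real (xpp - (i + j))) \<eta>
       * beta_dens (a01 + real i) (a10 + real j) \<theta>)" (is "_ = ?mixture")
proof -
  have A: "a01 + a10 > 0" and B: "a00 + a11 > 0" using assms by auto
  have Beta_ij: "Beta (a01 + real i) (a10 + real j) \<noteq> 0" for i j
    using assms Beta_real_pos[of "a01 + real i" "a10 + real j"] by simp
  have "a00 + a01 + a10 + a11 - (a01 + a10) = a00 + a11" by simp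
  then have "pI_eta_theta a00 a01 a10 a11 xpp \<eta> \<theta> =
    (\<Sum>(i, j)\<in>xset xpp. multi3 xpp i j / 2 ^ (i + j) * Beta a01 a10 / Beta (a01 + real i) (a10 + real j)
       * (\<eta> ^ (i + j) * (1 - \<eta>) ^ (xpp - (i + j)) * beta_dens (a01 + a10) (a00 + a11) \<eta>)
       * (\<theta> ^ i * (1 - \<theta>) ^ j * beta_dens a01 a10 \<theta>))"
    unfolding pI_eta_theta_def Let_def sum_distrib_left power_mult_distrib power_add
    using Beta_ij by (intro sum.cong refl) (auto simp: field_simps)
  also have "\<dots> = ?mixture"
    using assms A B Beta_ij[of 0 0] Beta_ij by (intro sum.cong refl) (auto simp: beta_dens_tilt)
  finally show ?thesis .
qed

lemma mI_eq:
  fixes a00 a01 a10 a11 :: real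
  assumes "a00 > 0" "a01 > 0" "a10 > 0" "a11 > 0"
  shows "mI a00 a01 a10 a11 xpp n00 n01 n10 n11 = beta_binomial n00 (n00 + n11) a00 a11 *
    (\<Sum>(i, j)\<in>xset xpp.
       multi3 xpp i j / 2 ^ (i + j)
       * (Beta (a01 + a10 + real (i + j)) (a00 + a11 + real (xpp - (i + j))) / Beta (a01 + a10) (a00 + a11))
       * beta_binomial (n01 + n10) (n00 + n01 + n10 + n11)
           (a01 + a10 + real (i + j)) (a00 + a11 + real (xpp - (i + j)))
       * beta_binomial n01 (n01 + n10) (a01 + real i) (a10 + real j))"
proof -
  define w where "w = (\<lambda>(i, j). multi3 xpp i j / 2 ^ (i + j)
       * (Beta (a01 + a10 + real (i + j)) (a00 + a11 + real (xpp - (i + j))) / Beta (a01 + a10) (a00 + a11)))"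
  define A where "A = (\<lambda>(i, j). a01 + a10 + real (i + j))"
  define B where "B = (\<lambda>(i, j). a00 + a11 + real (xpp - (i + j)))"
  define C where "C = (\<lambda>(i, j::nat). a01 + real i)"
  define D where "D = (\<lambda>(i::nat, j). a10 + real j)"
  define L\<eta> where "L\<eta> = Bin (n01 + n10) (n00 + n01 + n10 + n11)"
  define L\<theta> where "L\<theta> = Bin n01 (n01 + n10)"
  define g where "g = beta_binomial n00 (n00 + n11) a00 a11"
  have pos: "A p > 0 \<and> B p > 0 \<and> C p > 0 \<and> D p > 0" for p
    using assms by (auto simp: A_def B_def C_def D_def split: prod.split)
  have mixture: "pI_eta_theta a00 a01 a10 a11 xpp \<eta> \<theta> =
      (\<Sum>p\<in>xset xpp. w p * beta_dens (A p) (B p) \<eta> * beta_dens (C p) (D p) \<theta>)"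
    if "\<eta> \<in> {0..1}" "\<theta> \<in> {0..1}" for \<eta> \<theta>
    using pI_eta_theta_mixture[OF assms that]
    by (simp add: w_def A_def B_def C_def D_def case_prod_unfold)
  have integral_\<gamma>: "(LBINT \<gamma>:{0..1}. samp n00 n01 n10 n11 \<eta> \<theta> \<gamma> * pI a00 a01 a10 a11 xpp \<eta> \<theta> \<gamma>)
      = L\<eta> \<eta> * L\<theta> \<theta> * pI_eta_theta a00 a01 a10 a11 xpp \<eta> \<theta> * g" for \<eta> \<theta>
  proof -
    have "(\<lambda>\<gamma>. samp n00 n01 n10 n11 \<eta> \<theta> \<gamma> * pI a00 a01 a10 a11 xpp \<eta> \<theta> \<gamma>)
        = (\<lambda>\<gamma>. (L\<eta> \<eta> * L\<theta> \<theta> * pI_eta_theta a00 a01 a10 a11 xpp \<eta> \<theta>)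
                * (Bin n00 (n00 + n11) \<gamma> * beta_dens a00 a11 \<gamma>))"
      by (simp add: samp_factor pI_def L\<eta>_def L\<theta>_def mult_ac)
    then show ?thesis
      using integral_Bin_beta_dens[OF assms(1,4)] by (simp add: g_def)
  qed
  have integral_\<theta>: "(LBINT \<theta>:{0..1}. L\<eta> \<eta> * L\<theta> \<theta> * pI_eta_theta a00 a01 a10 a11 xpp \<eta> \<theta> * g)
      = L\<eta> \<eta> * (\<Sum>p\<in>xset xpp.
          (g * w p * beta_binomial n01 (n01 + n10) (C p) (D p)) * beta_dens (A p) (B p) \<eta>)"
    if "\<eta> \<in> {0..1}" for \<eta>
  proof -
    have "(LBINT \<theta>:{0..1}. L\<eta> \<eta> * L\<theta> \<theta> * pI_eta_theta a00 a01 a10 a11 xpp \<eta> \<theta> * g)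
        = (LBINT \<theta>:{0..1}. (L\<eta> \<eta> * g) *
             (L\<theta> \<theta> * (\<Sum>p\<in>xset xpp. (w p * beta_dens (A p) (B p) \<eta>) * beta_dens (C p) (D p) \<theta>)))"
      using that by (intro set_lebesgue_integral_cong) (auto simp: mixture mult_ac)
    also have "\<dots> = (L\<eta> \<eta> * g) *
        (\<Sum>p\<in>xset xpp. (w p * beta_dens (A p) (B p) \<eta>) * beta_binomial n01 (n01 + n10) (C p) (D p))"
      unfolding set_integral_mult_right L\<theta>_def using pos by (subst integral_Bin_beta_mixture) auto
    finally show ?thesis
      by (simp add: sum_distrib_left mult_ac)
  qed
  have "mI a00 a01 a10 a11 xpp n00 n01 n10 n11
      = (LBINT \<eta>:{0..1}. L\<eta> \<eta> * (\<Sum>p\<in>xset xpp.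
          (g * w p * beta_binomial n01 (n01 + n10) (C p) (D p)) * beta_dens (A p) (B p) \<eta>))"
    unfolding mI_def integral_\<gamma> by (intro set_lebesgue_integral_cong) (simp, use integral_\<theta> in blast)
  also have "\<dots> = (\<Sum>p\<in>xset xpp. (g * w p * beta_binomial n01 (n01 + n10) (C p) (D p))
                    * beta_binomial (n01 + n10) (n00 + n01 + n10 + n11) (A p) (B p))"
    unfolding L\<eta>_def using pos by (subst integral_Bin_beta_mixture) auto
  finally show ?thesis
    by (simp add: sum_distrib_left w_def A_def B_def C_def D_def g_def case_prod_unfold mult_ac)
qed

lemma m0_eq:
  fixes a00 a01 a10 a11 :: real
  assumes "a00 > 0" "a01 > 0" "a10 > 0" "a11 > 0"
  shows "m0 a00 a01 a10 a11 n00 n01 n10 n11 =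
    beta_binomial n00 (n00 + n11) a00 a11 * Bin n01 (n01 + n10) (1/2)
    * beta_binomial (n01 + n10) (n00 + n01 + n10 + n11) (a01 + a10) (a00 + a11)"
proof -
  have A: "a01 + a10 > 0" and B: "a00 + a11 > 0" using assms by auto
  have "(LBINT \<gamma>:{0..1}. samp n00 n01 n10 n11 \<eta> (1/2) \<gamma> * beta_dens (a01 + a10) (a00 + a11) \<eta>
          * beta_dens a00 a11 \<gamma>)
      = beta_binomial n00 (n00 + n11) a00 a11 * Bin n01 (n01 + n10) (1/2)
        * (Bin (n01 + n10) (n00 + n01 + n10 + n11) \<eta> * beta_dens (a01 + a10) (a00 + a11) \<eta>)" for \<eta>
  proof -
    have "(LBINT \<gamma>:{0..1}. samp n00 n01 n10 n11 \<eta> (1/2) \<gamma> * beta_dens (a01 + a10) (a00 + a11) \<eta>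
            * beta_dens a00 a11 \<gamma>)
        = (LBINT \<gamma>:{0..1}. (Bin n01 (n01 + n10) (1/2)
              * (Bin (n01 + n10) (n00 + n01 + n10 + n11) \<eta> * beta_dens (a01 + a10) (a00 + a11) \<eta>))
            * (Bin n00 (n00 + n11) \<gamma> * beta_dens a00 a11 \<gamma>))"
      by (intro set_lebesgue_integral_cong) (simp_all add: samp_factor)
    also have "\<dots> = beta_binomial n00 (n00 + n11) a00 a11 * Bin n01 (n01 + n10) (1/2)
        * (Bin (n01 + n10) (n00 + n01 + n10 + n11) \<eta> * beta_dens (a01 + a10) (a00 + a11) \<eta>)"
      unfolding set_integral_mult_right integral_Bin_beta_dens[OF assms(1,4)] by simp
    finally show ?thesis .
  qed
  then show ?thesis
    unfolding m0_def Let_def using integral_Bin_beta_dens[OF A B] by simp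
qed

lemma beta_binomial_pos:
  "y \<le> m \<Longrightarrow> A > 0 \<Longrightarrow> B > 0 \<Longrightarrow> beta_binomial y m A B > 0"
  by (simp add: beta_binomial_def Beta_real_pos add_pos_nonneg)

lemma Bin_half: "y \<le> m \<Longrightarrow> Bin y m (1/2) = real (m choose y) / 2 ^ m"
  by (simp add: Bin_def power_add[symmetric] power_one_over)

lemma BF_Co_eq:
  "BF_Co a00 a01 a10 a11 x01 x10 n00 n01 n10 n11
    = beta_binomial n01 (n01 + n10) (a01 + real x01) (a10 + real x10) / Bin n01 (n01 + n10) (1/2)"
  by (simp add: BF_Co_def beta_binomial_def Bin_half add_ac)

lemma BF_M_eq:
  fixes a00 a01 a10 a11 :: real
  assumes "a00 > 0" "a01 > 0" "a10 > 0" "a11 > 0" "x01 + x10 \<le> xpp"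
  shows "BF_M a00 a01 a10 a11 xpp x01 x10 n00 n01 n10 n11 = 2 ^ xpp
    * (Beta (a01 + a10 + real (x01 + x10)) (a00 + a11 + real (xpp - (x01 + x10))) / Beta (a01 + a10) (a00 + a11))
    * beta_binomial (n01 + n10) (n00 + n01 + n10 + n11)
        (a01 + a10 + real (x01 + x10)) (a00 + a11 + real (xpp - (x01 + x10)))
    / beta_binomial (n01 + n10) (n00 + n01 + n10 + n11) (a01 + a10) (a00 + a11)"
proof -
  have "Beta (a01 + a10 + real (x01 + x10)) (a00 + a11 + real (xpp - (x01 + x10))) > 0"
    "Beta (a01 + a10) (a00 + a11) > 0"
    "Beta (a01 + a10 + real (n01 + n10)) (a00 + a11 + real (n00 + n11)) > 0"
    using assms by (simp_all add: Beta_real_pos add_pos_nonneg)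
  then show ?thesis
    using assms(5) by (simp add: BF_M_def beta_binomial_def of_nat_diff field_simps)
qed

theorem proposition9:
  fixes a00 a01 a10 a11 :: real and xpp n00 n01 n10 n11 :: nat
  assumes "a00 > 0" and "a01 > 0" and "a10 > 0" and "a11 > 0"
  shows "BF_I a00 a01 a10 a11 xpp n00 n01 n10 n11 =
    (\<Sum>(x01, x10)\<in>xset xpp.
       multi3 xpp x01 x10 * (1/4) ^ x01 * (1/4) ^ x10 * (1/2) ^ (xpp - (x01 + x10))
       * BF_M a00 a01 a10 a11 xpp x01 x10 n00 n01 n10 n11
       * BF_Co a00 a01 a10 a11 x01 x10 n00 n01 n10 n11)"
proof -
  have "beta_binomial n00 (n00 + n11) a00 a11 > 0" "Bin n01 (n01 + n10) (1/2) > 0"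
    "beta_binomial (n01 + n10) (n00 + n01 + n10 + n11) (a01 + a10) (a00 + a11) > 0"
    using assms by (simp_all add: beta_binomial_pos Bin_half)
  moreover have "(4::real) ^ k = 2 ^ k * 2 ^ k" for k
    by (simp flip: power_mult_distrib)
  ultimately show ?thesis
    unfolding BF_I_def mI_eq[OF assms] m0_eq[OF assms] sum_distrib_left sum_divide_distrib
    by (intro sum.cong refl)
      (clarsimp simp: xset_def BF_M_eq[OF assms] BF_Co_eq power_diff power_add field_simps)
qed

end
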